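(* Let $p$ be prime and $H\le\mathrm{S}_n$ be in $\mathfrak{InP}(\mathrm{C}_p)$ with $|H|=p^s$, let $\gamma$ be as in the context, and let $M\in\mathrm{M}(s,k,p)$ be a generator matrix of $\gamma(H)$. Let $\beta$ be a point in the $H$-orbit $\Omega_j$. If the column $M_{*,j}$ is non-zero in exactly one row, say row $i$, then $\gamma(H_\beta)$ is the row space of the matrix obtained from $M$ by deleting row $i$.
   Context: $H\le\mathrm{S}_{n}$, $n=pk$, has orbits $\Omega_1,\dots,\Omega_k$ of size $p$ with each $G_i:=H|_{\Omega_i}$ cyclic of order $p$; $G=G_1\times\dots\times G_k$, $g_i$ a generator of $G_i$, and $\gamma:G\to\mathbb{F}_p^k$ the isomorphism $\gamma(g_1^{r_1}\cdots g_k^{r_k})=(r_1,\dots,r_k)$. A generator matrix of $\gamma(H)$ is an $s\times k$ matrix over $\mathbb{F}_p$ whose rows form a basis of $\gamma(H)$. $H_\beta$ is the point stabiliser. *)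

theory Defs
  imports "Berlekamp_Zassenhaus.Finite_Field" "Jordan_Normal_Form.Matrix"
    "HOL-Combinatorics.Permutations"
begin

definition restrict_perm :: "('a \<Rightarrow> 'a) \<Rightarrow> 'a set \<Rightarrow> ('a \<Rightarrow> 'a)" where
  "restrict_perm h A = (\<lambda>x. if x \<in> A then h x else x)"

definition perm_subgroup :: "('a \<Rightarrow> 'a) set \<Rightarrow> 'a set \<Rightarrow> bool" where
  "perm_subgroup H X \<longleftrightarrow> (\<forall>h\<in>H. h permutes X) \<and> id \<in> H \<and>
     (\<forall>g\<in>H. \<forall>h\<in>H. g \<circ> h \<in> H) \<and> (\<forall>h\<in>H. inv_into UNIV h \<in> H)"

definition orbit_of :: "('a \<Rightarrow> 'a) set \<Rightarrow> 'a \<Rightarrow> 'a set" where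
  "orbit_of H x = {h x | h. h \<in> H}"

definition constituent :: "('a \<Rightarrow> 'a) set \<Rightarrow> 'a set \<Rightarrow> ('a \<Rightarrow> 'a) set" where
  "constituent H A = (\<lambda>h. restrict_perm h A) ` H"

text \<open>H lies in InP(C_p) with orbits Omega_0..Omega_(k-1) (0-indexed): the sets Omega_i
  are pairwise disjoint, each of size p, they are exactly the H-orbits on X,
  and each constituent H|Omega_i is cyclic of order p.\<close>
definition InP_Cp :: "nat \<Rightarrow> ('a \<Rightarrow> 'a) set \<Rightarrow> 'a set \<Rightarrow> nat \<Rightarrow> (nat \<Rightarrow> 'a set) \<Rightarrow> bool" where
  "InP_Cp p H X k \<Omega> \<longleftrightarrow> perm_subgroup H X \<and> X = (\<Union>i<k. \<Omega> i) \<and>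
     (\<forall>i<k. \<forall>i'<k. i \<noteq> i' \<longrightarrow> \<Omega> i \<inter> \<Omega> i' = {}) \<and>
     (\<forall>i<k. card (\<Omega> i) = p \<and> (\<forall>x\<in>\<Omega> i. orbit_of H x = \<Omega> i)) \<and>
     (\<forall>i<k. card (constituent H (\<Omega> i)) = p \<and>
        (\<exists>g\<in>constituent H (\<Omega> i). constituent H (\<Omega> i) = {g ^^ m | m. True}))"

definition generators :: "('a \<Rightarrow> 'a) set \<Rightarrow> nat \<Rightarrow> (nat \<Rightarrow> 'a set) \<Rightarrow> (nat \<Rightarrow> 'a \<Rightarrow> 'a) \<Rightarrow> bool" where
  "generators H k \<Omega> g \<longleftrightarrow> (\<forall>i<k. g i \<in> constituent H (\<Omega> i) \<and>
       constituent H (\<Omega> i) = {g i ^^ m | m. True})"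

text \<open>gamma(g_1^r_1 ... g_k^r_k) = (r_1,...,r_k) over F_p = 'p mod_ring, for h in H
  (an element h of H equals the product of its constituents h|Omega_i).\<close>
definition gamma :: "nat \<Rightarrow> (nat \<Rightarrow> 'a set) \<Rightarrow> (nat \<Rightarrow> 'a \<Rightarrow> 'a) \<Rightarrow> ('a \<Rightarrow> 'a)
    \<Rightarrow> 'p::prime_card mod_ring vec" where
  "gamma k \<Omega> g h = vec k (\<lambda>i. THE r. restrict_perm h (\<Omega> i) = g i ^^ nat (to_int_mod_ring r))"

definition row_space :: "'f::field mat \<Rightarrow> 'f vec set" where
  "row_space M = {transpose_mat M *\<^sub>v c | c. c \<in> carrier_vec (dim_row M)}"

definition generator_matrix :: "'f::field mat \<Rightarrow> 'f vec set \<Rightarrow> bool" where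
  "generator_matrix M V \<longleftrightarrow> row_space M = V \<and>
     (\<forall>c\<in>carrier_vec (dim_row M). transpose_mat M *\<^sub>v c = 0\<^sub>v (dim_col M) \<longrightarrow> c = 0\<^sub>v (dim_row M))"

definition delete_row :: "'f mat \<Rightarrow> nat \<Rightarrow> 'f mat" where
  "delete_row M i = mat (dim_row M - 1) (dim_col M)
     (\<lambda>(a, b). M $$ (if a < i then a else Suc a, b))"

definition point_stabiliser :: "('a \<Rightarrow> 'a) set \<Rightarrow> 'a \<Rightarrow> ('a \<Rightarrow> 'a) set" where
  "point_stabiliser H \<beta> = {h \<in> H. h \<beta> = \<beta>}"

end

theory Submission
  imports Defs "Jordan_Normal_Form.Determinant" "HOL-Combinatorics.Cycles"
begin

(* The stabiliser of \<beta> \<in> \<Omega>\<^sub>j consists of those h \<in> H whose constituent on \<Omega>\<^sub>j is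
  trivial: the generator g\<^sub>j of the cyclic group G\<^sub>j of prime order p moves \<beta>, so a power
  g\<^sub>j\<^sup>n fixes \<beta> iff p divides n, i.e. iff the j-th coordinate of \<gamma>(h) vanishes. Hence
  \<gamma>(H\<^sub>\<beta>) is the hyperplane section x\<^sub>j = 0 of \<gamma>(H). A vector c M of the row space has
  j-th coordinate M\<^sub>i\<^sub>j c\<^sub>i with M\<^sub>i\<^sub>j \<noteq> 0, so the section consists of the combinations
  with c\<^sub>i = 0, which is the row space of M without row i. *)

lemma funpow_mod_period:
  assumes "f ^^ d = id"
  shows "f ^^ n = f ^^ (n mod d)"
  using funpow_mod_eq[where f=f and n=d and m=n] assms by (simp add: fun_eq_iff)

lemma funpow_period_card_powers:
  fixes f :: "'a \<Rightarrow> 'a"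
  assumes "inj f" and card: "card {f ^^ m | m. True} = p" and "0 < p"
  shows "f ^^ p = id" and "inj_on (\<lambda>m. f ^^ m) {..<p}"
proof -
  let ?S = "{f ^^ m | m. True}"
  have "finite ?S"
    using card \<open>0 < p\<close> card_ge_0_finite by blast
  have "\<not> inj_on (\<lambda>m. f ^^ m) {..p}"
  proof
    assume "inj_on (\<lambda>m. f ^^ m) {..p}"
    then have "card {..p} \<le> card ?S"
      using \<open>finite ?S\<close> by (intro card_inj_on_le) auto
    then show False
      using card by simp
  qed
  then obtain a b where "a < b" "b \<le> p" "f ^^ a = f ^^ b"
    unfolding inj_on_def by (metis atMost_iff linorder_neqE_nat)
  define d where "d = b - a"
  have d: "f ^^ d = id" "0 < d" "d \<le> p"
    using funpow_diff[OF \<open>inj f\<close>, of a b] \<open>a < b\<close> \<open>b \<le> p\<close> \<open>f ^^ a = f ^^ b\<close>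
    by (auto simp: d_def fun_eq_iff)
  have powers: "?S = (\<lambda>m. f ^^ m) ` {..<d}"
  proof (intro equalityI subsetI)
    fix x
    assume "x \<in> ?S"
    then obtain m where "x = f ^^ (m mod d)"
      using funpow_mod_period[OF d(1)] by auto
    then show "x \<in> (\<lambda>m. f ^^ m) ` {..<d}"
      using d(2) by simp
  qed auto
  then have "p \<le> d"
    using card card_image_le[of "{..<d}" "\<lambda>m. f ^^ m"] by simp
  with d show "f ^^ p = id"
    by simp
  with powers card \<open>d \<le> p\<close> \<open>p \<le> d\<close> show "inj_on (\<lambda>m. f ^^ m) {..<p}"
    by (intro eq_card_imp_inj_on) auto
qed

lemma funpow_fixes_iff_prime_dvd:
  assumes "prime p" "f ^^ p = id" "f x \<noteq> x"
  shows "(f ^^ n) x = x \<longleftrightarrow> p dvd n"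
proof -
  have "least_power f x dvd p"
    using assms(2) by (intro least_power_minimal) simp
  moreover have "least_power f x \<noteq> 1"
    using least_powerI(1)[where f=f and n=p and x=x] assms prime_gt_0_nat by auto
  ultimately have "least_power f x = p"
    using assms(1) by (metis prime_nat_iff)
  then have "(f ^^ n) x = x \<Longrightarrow> p dvd n"
    using least_power_minimal by metis
  moreover have "p dvd n \<Longrightarrow> (f ^^ n) x = x"
    using assms(2) by (auto simp: funpow_mult[symmetric])
  ultimately show ?thesis
    by blast
qed

lemma to_int_mod_ring_of_nat:
  "to_int_mod_ring (of_nat n :: 'a::nontriv mod_ring) = int (n mod CARD('a))"
proof -
  have "(of_nat n :: 'a mod_ring) = of_nat (n mod CARD('a))"
    by (metis of_nat_mod_CHAR semiring_char_mod_ring)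
  then have "(of_nat n :: 'a mod_ring) = of_int_mod_ring (int (n mod CARD('a)))"
    by (simp add: of_nat_of_int_mod_ring)
  then show ?thesis
    by simp
qed

lemma gamma_nth:
  assumes "j < k" "restrict_perm h (\<Omega> j) = g j ^^ n"
    and "g j ^^ CARD('p) = id" "inj_on (\<lambda>m. g j ^^ m) {..<CARD('p)}"
  shows "(gamma k \<Omega> g h :: 'p::prime_card mod_ring vec) $ j = of_nat n"
proof -
  let ?p = "CARD('p)"
  have "(gamma k \<Omega> g h :: 'p mod_ring vec) $ j
      = (THE r::'p mod_ring. g j ^^ n = g j ^^ nat (to_int_mod_ring r))"
    using assms(1,2) by (simp add: gamma_def)
  also have "\<dots> = of_nat n"
  proof (rule the_equality)
    show "g j ^^ n = g j ^^ nat (to_int_mod_ring (of_nat n :: 'p mod_ring))"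
      using funpow_mod_period[OF assms(3)] by (simp add: to_int_mod_ring_of_nat)
  next
    fix r :: "'p mod_ring"
    assume r: "g j ^^ n = g j ^^ nat (to_int_mod_ring r)"
    have "to_int_mod_ring r \<in> {0..<int ?p}"
      using range_to_int_mod_ring by blast
    moreover have "g j ^^ nat (to_int_mod_ring r) = g j ^^ (n mod ?p)"
      using r funpow_mod_period[OF assms(3)] by simp
    ultimately have "nat (to_int_mod_ring r) = n mod ?p"
      using inj_onD[OF assms(4)] by (simp add: nat_less_iff)
    then have "to_int_mod_ring r = to_int_mod_ring (of_nat n :: 'p mod_ring)"
      using \<open>to_int_mod_ring r \<in> {0..<int ?p}\<close> by (auto simp: to_int_mod_ring_of_nat)
    then show "r = of_nat n"
      by (metis of_int_mod_ring_to_int_mod_ring)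
  qed
  finally show ?thesis .
qed

lemma restrict_perm_inj:
  assumes "inj h" "h ` A \<subseteq> A"
  shows "inj (restrict_perm h A)"
  using assms unfolding inj_def restrict_perm_def image_subset_iff by metis

lemma InP_Cp_orbit_closed:
  assumes "InP_Cp p H X k \<Omega>" "j < k" "h \<in> H" "x \<in> \<Omega> j"
  shows "h x \<in> \<Omega> j"
proof -
  have "orbit_of H x = \<Omega> j"
    using assms(1,2,4) unfolding InP_Cp_def by blast
  then show ?thesis
    using assms(3) unfolding orbit_of_def by blast
qed

lemma generators_funpow:
  assumes "generators H k \<Omega> g" "j < k" "h \<in> H"
  obtains n where "restrict_perm h (\<Omega> j) = g j ^^ n"
  using assms unfolding generators_def constituent_def by blast

lemma InP_Cp_generator_period:
  assumes "InP_Cp p H X k \<Omega>" "generators H k \<Omega> g" "j < k" "0 < p"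
  shows "g j ^^ p = id" and "inj_on (\<lambda>m. g j ^^ m) {..<p}"
proof -
  obtain h where h: "h \<in> H" "g j = restrict_perm h (\<Omega> j)"
    using assms(2,3) unfolding generators_def constituent_def by blast
  have "inj h"
    using h(1) assms(1) permutes_inj unfolding InP_Cp_def perm_subgroup_def by blast
  then have "inj (g j)"
    using h InP_Cp_orbit_closed[OF assms(1,3)] by (auto intro: restrict_perm_inj)
  moreover have "card {g j ^^ m | m. True} = p"
    using assms(1-3) unfolding InP_Cp_def generators_def by auto
  ultimately show "g j ^^ p = id" and "inj_on (\<lambda>m. g j ^^ m) {..<p}"
    using funpow_period_card_powers assms(4) by blast+
qed

lemma InP_Cp_generator_moves:
  assumes "InP_Cp p H X k \<Omega>" "generators H k \<Omega> g" "j < k" "\<beta> \<in> \<Omega> j" "1 < p"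
  shows "g j \<beta> \<noteq> \<beta>"
proof
  assume fixed: "g j \<beta> = \<beta>"
  have "h \<beta> = \<beta>" if h: "h \<in> H" for h
  proof -
    obtain n where n: "restrict_perm h (\<Omega> j) = g j ^^ n"
      using generators_funpow[OF assms(2,3) h] .
    have "(g j ^^ n) \<beta> = \<beta>"
      using fixed by (induction n) simp_all
    then have "restrict_perm h (\<Omega> j) \<beta> = \<beta>"
      by (simp add: n)
    then show ?thesis
      using assms(4) by (simp add: restrict_perm_def)
  qed
  then have "orbit_of H \<beta> \<subseteq> {\<beta>}"
    unfolding orbit_of_def by blast
  moreover have "orbit_of H \<beta> = \<Omega> j" "card (\<Omega> j) = p"
    using assms(1,3,4) unfolding InP_Cp_def by auto
  ultimately have "card (\<Omega> j) \<le> 1"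
    using card_mono[of "{\<beta>}" "orbit_of H \<beta>"] by simp
  then show False
    using \<open>card (\<Omega> j) = p\<close> assms(5) by simp
qed

lemma InP_Cp_fixes_iff_gamma_nth_zero:
  assumes "InP_Cp CARD('p) H X k \<Omega>" "generators H k \<Omega> g" "j < k" "\<beta> \<in> \<Omega> j" "h \<in> H"
  shows "h \<beta> = \<beta> \<longleftrightarrow> (gamma k \<Omega> g h :: 'p::prime_card mod_ring vec) $ j = 0"
proof -
  let ?p = "CARD('p)"
  have p: "prime ?p" "0 < ?p" "1 < ?p"
    using prime_card prime_gt_1_nat by auto
  obtain n where n: "restrict_perm h (\<Omega> j) = g j ^^ n"
    using generators_funpow[OF assms(2,3,5)] .
  note period = InP_Cp_generator_period[OF assms(1-3) p(2)]
  have "h \<beta> = (g j ^^ n) \<beta>"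
    using fun_cong[OF n, of \<beta>] assms(4) by (simp add: restrict_perm_def)
  also have "\<dots> = \<beta> \<longleftrightarrow> ?p dvd n"
    using funpow_fixes_iff_prime_dvd[OF p(1) period(1) InP_Cp_generator_moves[OF assms(1-4) p(3)]] .
  also have "\<dots> \<longleftrightarrow> (of_nat n :: 'p mod_ring) = 0"
    by (simp add: of_nat_eq_0_iff_char_dvd semiring_char_mod_ring)
  finally show ?thesis
    using gamma_nth[where \<Omega>=\<Omega> and g=g and j=j, OF assms(3) n period] by simp
qed

lemma transpose_mult_vec_nth:
  assumes "A \<in> carrier_mat s k" "c \<in> carrier_vec s" "l < k"
  shows "(transpose_mat A *\<^sub>v c) $ l = (\<Sum>r<s. A $$ (r, l) * c $ r)"
  using assms by (auto simp: scalar_prod_def lessThan_atLeast0 intro!: sum.cong)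

lemma delete_row_carrier:
  "A \<in> carrier_mat s k \<Longrightarrow> delete_row A i \<in> carrier_mat (s - 1) k"
  by (simp add: delete_row_def)

lemma delete_row_index:
  "A \<in> carrier_mat s k \<Longrightarrow> a < s - 1 \<Longrightarrow> l < k
    \<Longrightarrow> delete_row A i $$ (a, l) = A $$ (insert_index i a, l)"
  by (simp add: delete_row_def insert_index_def)

lemma transpose_delete_row_mult_vec:
  assumes A: "A \<in> carrier_mat s k" and i: "i < s" and d: "d \<in> carrier_vec (s - 1)"
  shows "transpose_mat (delete_row A i) *\<^sub>v d
    = transpose_mat A *\<^sub>v vec s (\<lambda>r. if r = i then 0 else d $ delete_index i r)"
    (is "_ = _ *\<^sub>v ?c")
proof (rule eq_vecI)
  fix l
  assume "l < dim_vec (transpose_mat A *\<^sub>v ?c)"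
  then have l: "l < k"
    using A by simp
  have "(transpose_mat (delete_row A i) *\<^sub>v d) $ l
      = (\<Sum>a<s - 1. A $$ (insert_index i a, l) * d $ a)"
    using A d l by (simp add: transpose_mult_vec_nth[OF delete_row_carrier] delete_row_index)
  also have "\<dots> = (\<Sum>r \<in> insert_index i ` {..<s - 1}. A $$ (r, l) * ?c $ r)"
  proof -
    have "insert_index i a < s" if "a < s - 1" for a
      using that i by (auto simp: insert_index_def)
    then show ?thesis
      by (subst sum.reindex[OF insert_index_inj_on]) simp
  qed
  also have "\<dots> = (\<Sum>r \<in> {..<s} - {i}. A $$ (r, l) * ?c $ r)"
    using insert_index_image[of i "s - 1"] i by (simp add: lessThan_atLeast0)
  also have "\<dots> = (\<Sum>r<s. A $$ (r, l) * ?c $ r)"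
    using i by (intro sum.mono_neutral_left) auto
  also have "\<dots> = (transpose_mat A *\<^sub>v ?c) $ l"
    using transpose_mult_vec_nth[OF A _ l] by simp
  finally show "(transpose_mat (delete_row A i) *\<^sub>v d) $ l = (transpose_mat A *\<^sub>v ?c) $ l" .
qed (use A in \<open>simp add: delete_row_def\<close>)

lemma row_space_delete_row:
  assumes A: "A \<in> carrier_mat s k" and i: "i < s"
  shows "row_space (delete_row A i)
    = {transpose_mat A *\<^sub>v c | c. c \<in> carrier_vec s \<and> c $ i = 0}"
proof (intro equalityI subsetI)
  fix v
  assume "v \<in> row_space (delete_row A i)"
  then obtain d where "d \<in> carrier_vec (s - 1)" "v = transpose_mat (delete_row A i) *\<^sub>v d"
    using A by (auto simp: row_space_def delete_row_def)
  then show "v \<in> {transpose_mat A *\<^sub>v c | c. c \<in> carrier_vec s \<and> c $ i = 0}"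
    using transpose_delete_row_mult_vec[OF A i] i by fastforce
next
  fix v
  assume "v \<in> {transpose_mat A *\<^sub>v c | c. c \<in> carrier_vec s \<and> c $ i = 0}"
  then obtain c where c: "c \<in> carrier_vec s" "c $ i = 0" "v = transpose_mat A *\<^sub>v c"
    by blast
  define d where "d = vec (s - 1) (\<lambda>a. c $ insert_index i a)"
  have "vec s (\<lambda>r. if r = i then 0 else d $ delete_index i r) = c"
  proof (rule eq_vecI)
    fix r
    assume "r < dim_vec c"
    then show "vec s (\<lambda>r. if r = i then 0 else d $ delete_index i r) $ r = c $ r"
      using c i by (auto simp: d_def insert_delete_index delete_index_def)
  qed (use c in simp)
  then have "v = transpose_mat (delete_row A i) *\<^sub>v d"
    using transpose_delete_row_mult_vec[OF A i, of d] c by (simp add: d_def)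
  then show "v \<in> row_space (delete_row A i)"
    using A by (auto simp: row_space_def delete_row_def d_def)
qed

lemma row_space_nth_zero_eq_delete_row:
  fixes A :: "'f::field mat"
  assumes A: "A \<in> carrier_mat s k" and "j < k" "i < s"
    and column: "\<forall>r<s. A $$ (r, j) \<noteq> 0 \<longleftrightarrow> r = i"
  shows "{v \<in> row_space A. v $ j = 0} = row_space (delete_row A i)"
proof -
  have nth: "(transpose_mat A *\<^sub>v c) $ j = A $$ (i, j) * c $ i" if "c \<in> carrier_vec s" for c
  proof -
    have "(transpose_mat A *\<^sub>v c) $ j = (\<Sum>r<s. A $$ (r, j) * c $ r)"
      using A that \<open>j < k\<close> by (rule transpose_mult_vec_nth)
    also have "\<dots> = (\<Sum>r\<in>{i}. A $$ (r, j) * c $ r)"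
      using column \<open>i < s\<close> by (intro sum.mono_neutral_right) auto
    finally show ?thesis
      by simp
  qed
  have "A $$ (i, j) \<noteq> 0"
    using column \<open>i < s\<close> by simp
  then have "{v \<in> row_space A. v $ j = 0}
      = {transpose_mat A *\<^sub>v c | c. c \<in> carrier_vec s \<and> c $ i = 0}"
    using A nth by (auto simp: row_space_def)
  also have "\<dots> = row_space (delete_row A i)"
    using row_space_delete_row[OF A \<open>i < s\<close>] ..
  finally show ?thesis .
qed

theorem lemma5p1:
  fixes H :: "('a \<Rightarrow> 'a) set" and X :: "'a set" and k s :: nat
    and \<Omega> :: "nat \<Rightarrow> 'a set" and g :: "nat \<Rightarrow> 'a \<Rightarrow> 'a"
    and M :: "'p::prime_card mod_ring mat" and i j :: nat and \<beta> :: 'a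
  assumes "InP_Cp CARD('p) H X k \<Omega>"
    and "card H = CARD('p) ^ s"
    and "generators H k \<Omega> g"
    and "M \<in> carrier_mat s k"
    and "generator_matrix M (gamma k \<Omega> g ` H)"
    and "j < k" and "\<beta> \<in> \<Omega> j"
    and "i < s" and "\<forall>r<s. M $$ (r, j) \<noteq> 0 \<longleftrightarrow> r = i"
  shows "gamma k \<Omega> g ` point_stabiliser H \<beta> = row_space (delete_row M i)"
proof -
  have "gamma k \<Omega> g ` point_stabiliser H \<beta>
      = {v \<in> gamma k \<Omega> g ` H. v $ j = (0 :: 'p mod_ring)}"
    using InP_Cp_fixes_iff_gamma_nth_zero[OF assms(1,3,6,7)]
    unfolding point_stabiliser_def by auto
  also have "\<dots> = {v \<in> row_space M. v $ j = 0}"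
    using assms(5) unfolding generator_matrix_def by simp
  also have "\<dots> = row_space (delete_row M i)"
    using row_space_nth_zero_eq_delete_row[OF assms(4,6,8,9)] .
  finally show ?thesis .
qed

end
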